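(* Let $m\ge 2$ and let $B$ be a set of edges of $CK(2m)$. Then $B$ is a blocker if and only if there exist an integer $a$, an integer $t$ with $2\le t\le m$, and integers $\epsilon_{t+1},\dots,\epsilon_m$ with $1\le \epsilon_{t+1}<\epsilon_{t+2}<\dots<\epsilon_m\le m-2$ (this list being empty when $t=m$) such that, with all vertex labels taken modulo $2m$, \[ B=\{[a+i-1,\,a+i]:1\le i\le t\}\ \cup\ \{[a+t+j-1-\epsilon_{t+j},\,a+t+j+\epsilon_{t+j}]:1\le j\le m-t\}. \] In particular every blocker is a crossing-free caterpillar tree whose spine is the boundary path $\langle a,a+1,\dots,a+t\rangle$ of length $t\ge 2$, and $t$ is the number of boundary edges of $B$.
   Context: $CK(2m)$ denotes the complete convex geometric graph whose vertices are the $2m$ vertices of a convex polygon, labelled cyclically $0,1,\dots,2m-1$ (labels taken modulo $2m$), and whose edges are all straight segments $[i,j]$ between pairs of vertices. Two edges with four distinct endpoints cross (meet in an interior point) iff their endpoints alternate in the cyclic order. A simple perfect matching (SPM) is a set of $m$ edges that are pairwise disjoint (no common endpoint and no crossing). A blocking set is a set of edges containing at least one edge of every SPM. A blocker is a blocking set with exactly $m$ edges. Boundary edges are the edges $[i,i+1]$. A caterpillar is a tree such that deleting all leaves and their incident edges leaves a path (or the empty graph); a spine is a longest path in it. *)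

theory Defs
  imports Main
begin

definition ck_vertices :: "nat \<Rightarrow> int set" where
  "ck_vertices m = {0..<2 * int m}"

definition ck_edges :: "nat \<Rightarrow> int set set" where
  "ck_edges m = {{i, j} | i j. i \<in> ck_vertices m \<and> j \<in> ck_vertices m \<and> i \<noteq> j}"

definition seg :: "nat \<Rightarrow> int \<Rightarrow> int \<Rightarrow> int set" where
  "seg m i j = {i mod (2 * int m), j mod (2 * int m)}"

text \<open>Two edges with four distinct endpoints cross iff their endpoints alternate
  in the cyclic order (equivalently, in the linear order of the labels 0..2m-1).\<close>
definition crosses :: "int set \<Rightarrow> int set \<Rightarrow> bool" where
  "crosses e f \<longleftrightarrow> e \<inter> f = {} \<and>
     (\<exists>a b c d. e = {a, b} \<and> f = {c, d} \<and> a < b \<and> c < d \<and>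
        ((a < c \<and> c < b \<and> b < d) \<or> (c < a \<and> a < d \<and> d < b)))"

definition disjoint_edges :: "int set \<Rightarrow> int set \<Rightarrow> bool" where
  "disjoint_edges e f \<longleftrightarrow> e \<inter> f = {} \<and> \<not> crosses e f"

definition is_SPM :: "nat \<Rightarrow> int set set \<Rightarrow> bool" where
  "is_SPM m M \<longleftrightarrow> M \<subseteq> ck_edges m \<and> finite M \<and> card M = m \<and>
     (\<forall>e\<in>M. \<forall>f\<in>M. e \<noteq> f \<longrightarrow> disjoint_edges e f)"

definition blocking_set :: "nat \<Rightarrow> int set set \<Rightarrow> bool" where
  "blocking_set m B \<longleftrightarrow> B \<subseteq> ck_edges m \<and> (\<forall>M. is_SPM m M \<longrightarrow> B \<inter> M \<noteq> {})"

definition blocker :: "nat \<Rightarrow> int set set \<Rightarrow> bool" where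
  "blocker m B \<longleftrightarrow> blocking_set m B \<and> finite B \<and> card B = m"

end

theory Submission
  imports Defs
begin

(*
  The edges of CK(2m) fall into m perpendicular classes: for an axis position y the
  class consists of the chords seg(y - d, y + 1 + d), 0 <= d < m.  Each class is a
  rotated rainbow (m nested chords), hence an SPM.

  Necessity.  A blocker has m edges and meets each of the m classes, so it meets each
  class exactly once; this defines an offset function rho on axis positions.  Testing
  B against rotated matchings built from two rainbows and one boundary edge gives an
  antiperiodicity rule and a jump rule for rho.  A purely combinatorial analysis of
  integer functions obeying these rules (locale offset_fun) shows that rho vanishes on
  a window of t consecutive positions and then increases strictly up to m - 1; read
  off, this is exactly the claimed shape.

  Sufficiency.  An SPM avoiding a set of the claimed shape yields a noncrossing
  fixed-point-free involution p of the vertices with certain forbidden pairs (locale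
  avoiding_matching).  Noncrossing forces every chord to join vertices of different
  parity and the chords leaving the spine vertices to be nested; an intermediate
  value argument on the midpoints of these chords then exhibits a forbidden chord.
*)

section \<open>Chords of the convex polygon\<close>

definition btw :: "int \<Rightarrow> int \<Rightarrow> int \<Rightarrow> bool" where
  "btw a b c \<longleftrightarrow> min a b < c \<and> c < max a b"

lemma crosses_iff:
  "crosses {a,b} {c,d} \<longleftrightarrow>
     a \<noteq> c \<and> a \<noteq> d \<and> b \<noteq> c \<and> b \<noteq> d \<and> a \<noteq> b \<and> c \<noteq> d \<and> (btw a b c \<noteq> btw a b d)"
proof
  assume "crosses {a,b} {c,d}"
  then obtain a' b' c' d' where h: "{a,b} \<inter> {c,d} = {}" "{a,b} = {a',b'}" "{c,d} = {c',d'}"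
    "a' < b'" "c' < d'" "(a' < c' \<and> c' < b' \<and> b' < d') \<or> (c' < a' \<and> a' < d' \<and> d' < b')"
    unfolding crosses_def by (elim conjE exE) (rule that, assumption+)
  have "(a = a' \<and> b = b') \<or> (a = b' \<and> b = a')" "(c = c' \<and> d = d') \<or> (c = d' \<and> d = c')"
    using h(2,3) by (simp_all add: doubleton_eq_iff)
  moreover have "a \<noteq> c" "a \<noteq> d" "b \<noteq> c" "b \<noteq> d" using h(1) by auto
  ultimately show "a \<noteq> c \<and> a \<noteq> d \<and> b \<noteq> c \<and> b \<noteq> d \<and> a \<noteq> b \<and> c \<noteq> d \<and> (btw a b c \<noteq> btw a b d)"
    using h(4-6) unfolding btw_def min_def max_def by (elim disjE conjE; simp; linarith)
next
  assume h: "a \<noteq> c \<and> a \<noteq> d \<and> b \<noteq> c \<and> b \<noteq> d \<and> a \<noteq> b \<and> c \<noteq> d \<and> (btw a b c \<noteq> btw a b d)"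
  show "crosses {a,b} {c,d}"
    unfolding crosses_def
  proof
    show "{a,b} \<inter> {c,d} = {}" using h by auto
    have "{a,b} = {min a b, max a b}" "{c,d} = {min c d, max c d}" by (auto simp: min_def max_def)
    moreover have "min a b < max a b" "min c d < max c d" using h by (auto simp: min_def max_def)
    moreover have "(min a b < min c d \<and> min c d < max a b \<and> max a b < max c d)
        \<or> (min c d < min a b \<and> min a b < max c d \<and> max c d < max a b)"
      using h unfolding btw_def min_def max_def by (cases "a \<le> b"; cases "c \<le> d"; auto)
    ultimately show "\<exists>a' b' c' d'. {a,b} = {a',b'} \<and> {c,d} = {c',d'} \<and> a' < b' \<and> c' < d' \<and>
        ((a' < c' \<and> c' < b' \<and> b' < d') \<or> (c' < a' \<and> a' < d' \<and> d' < b'))"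
      by (intro exI conjI) (assumption+)
  qed
qed

lemma disjoint_edges_sym: "disjoint_edges e f \<Longrightarrow> disjoint_edges f e"
proof -
  assume h: "disjoint_edges e f"
  have "crosses f e \<Longrightarrow> crosses e f" unfolding crosses_def by (elim conjE exE) (metis Int_commute)
  thus ?thesis using h unfolding disjoint_edges_def by (auto simp: Int_commute)
qed

lemma ck_edges_iff:
  "e \<in> ck_edges m \<longleftrightarrow>
     (\<exists>i j. e = {i,j} \<and> 0 \<le> i \<and> i < 2 * int m \<and> 0 \<le> j \<and> j < 2 * int m \<and> i \<noteq> j)"
  unfolding ck_edges_def ck_vertices_def by auto

lemma ck_sub: "e \<in> ck_edges m \<Longrightarrow> e \<subseteq> {0..<2 * int m}"
  unfolding ck_edges_iff by auto

lemma ck_card2: "e \<in> ck_edges m \<Longrightarrow> card e = 2"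
  unfolding ck_edges_iff by auto

lemma separated_disjoint:
  assumes "e \<in> ck_edges m" "f \<in> ck_edges m" "\<forall>x\<in>e. \<forall>y\<in>f. x < y"
  shows "disjoint_edges e f"
proof -
  obtain a b where e: "e = {a,b}" "a \<noteq> b" using assms(1) unfolding ck_edges_iff by blast
  obtain c d where f: "f = {c,d}" "c \<noteq> d" using assms(2) unfolding ck_edges_iff by blast
  have "a < c" "a < d" "b < c" "b < d" using assms(3) e f by auto
  hence "\<not> btw a b c" "\<not> btw a b d" unfolding btw_def by auto
  hence "\<not> crosses e f" unfolding e f crosses_iff by auto
  moreover have "e \<inter> f = {}" using assms(3) by fastforce
  ultimately show ?thesis unfolding disjoint_edges_def by auto
qed

lemma seg_in_range:
  "0 \<le> a \<Longrightarrow> a < 2 * int m \<Longrightarrow> 0 \<le> b \<Longrightarrow> b < 2 * int m \<Longrightarrow> seg m a b = {a,b}"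
  unfolding seg_def by simp

lemma seg_swap: "seg m a b = seg m b a"
  unfolding seg_def by auto

lemma seg_shift: "seg m (a + 2 * int m) b = seg m a b"
  unfolding seg_def by auto

lemma seg_eq_cases:
  assumes "seg m a b = seg m a' b'"
  shows "(2 * int m dvd a - a' \<and> 2 * int m dvd b - b') \<or> (2 * int m dvd a - b' \<and> 2 * int m dvd b - a')"
  using assms unfolding seg_def doubleton_eq_iff mod_eq_dvd_iff .

lemma dvd_small: fixes x n :: int assumes "n dvd x" "\<bar>x\<bar> < n" shows "x = 0"
proof (rule ccontr)
  assume "x \<noteq> 0"
  hence "\<bar>n\<bar> \<le> \<bar>x\<bar>" using assms(1) by (rule dvd_imp_le_int)
  thus False using assms(2) by arith
qed

section \<open>Rotations\<close>

lemma mod_shift_inj: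
  fixes x y n r :: int
  assumes "0 \<le> x" "x < n" "0 \<le> y" "y < n" "(x + r) mod n = (y + r) mod n"
  shows "x = y"
proof (rule ccontr)
  assume ne: "x \<noteq> y"
  have "((x + r) mod n - (y + r) mod n) mod n = 0" using assms(5) by simp
  hence "(x - y) mod n = 0" by (simp add: mod_diff_eq)
  hence "n dvd x - y" by presburger
  moreover have "\<bar>x - y\<bar> < n" using assms by arith
  ultimately show False using dvd_small[of n "x - y"] ne by simp
qed

lemma small_mod:
  fixes x n :: int
  assumes "-n < x" "x < n"
  shows "x mod n = (if 0 \<le> x then x else x + n)"
proof (cases "0 \<le> x")
  case True then show ?thesis using assms by simp
next
  case False
  have "x mod n = (x + n) mod n" by simp
  also have "\<dots> = x + n" using assms False by (intro mod_pos_pos_trivial) auto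
  finally show ?thesis using False by simp
qed

lemma btw_arc:
  fixes n a b c :: int
  assumes "0 \<le> a" "a < n" "0 \<le> b" "b < n" "0 \<le> c" "c < n" "a \<noteq> b" "a \<noteq> c" "b \<noteq> c"
  shows "btw a b c \<longleftrightarrow> (((c - a) mod n < (b - a) mod n) = (a < b))"
  unfolding btw_def small_mod[of n "c-a"] small_mod[of n "b-a"]
  using assms by (auto simp: small_mod min_def max_def)

text \<open>Hence whether two chords cross depends only on the cyclic order of their
  endpoints, and is invariant under rotation.\<close>
lemma btw_rot:
  fixes n r a b c d :: int
  assumes "0 \<le> a" "a < n" "0 \<le> b" "b < n" "0 \<le> c" "c < n" "0 \<le> d" "d < n"
    "a \<noteq> c" "a \<noteq> d" "b \<noteq> c" "b \<noteq> d" "a \<noteq> b" "c \<noteq> d"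
  shows "(btw ((a+r) mod n) ((b+r) mod n) ((c+r) mod n) \<noteq> btw ((a+r) mod n) ((b+r) mod n) ((d+r) mod n))
     \<longleftrightarrow> (btw a b c \<noteq> btw a b d)"
proof -
  have n: "n > 0" using assms by simp
  have inj: "\<And>x y. 0 \<le> x \<Longrightarrow> x < n \<Longrightarrow> 0 \<le> y \<Longrightarrow> y < n \<Longrightarrow> x \<noteq> y \<Longrightarrow> (x+r) mod n \<noteq> (y+r) mod n"
    using mod_shift_inj by metis
  have rng: "\<And>x. 0 \<le> (x+r) mod n" "\<And>x. (x+r) mod n < n" using n by auto
  have df: "\<And>x y. ((x+r) mod n - (y+r) mod n) mod n = (x - y) mod n"
    by (simp add: mod_diff_eq)
  show ?thesis
    using btw_arc[of "(a+r) mod n" n "(b+r) mod n" "(c+r) mod n"] btw_arc[of "(a+r) mod n" n "(b+r) mod n" "(d+r) mod n"]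
      btw_arc[of a n b c] btw_arc[of a n b d] inj[of a b] inj[of a c] inj[of a d] inj[of b c] inj[of b d] inj[of c d]
      rng assms unfolding df by auto
qed

definition rot_vertex :: "nat \<Rightarrow> int \<Rightarrow> int \<Rightarrow> int" where
  "rot_vertex m r v = (v + r) mod (2 * int m)"

definition rot_edge :: "nat \<Rightarrow> int \<Rightarrow> int set \<Rightarrow> int set" where
  "rot_edge m r e = rot_vertex m r ` e"

lemma seg_rot: "rot_edge m r (seg m a b) = seg m (a + r) (b + r)"
  unfolding rot_edge_def rot_vertex_def seg_def by (simp add: mod_add_left_eq)

lemma rot_pair: "rot_edge m r {i,j} = {rot_vertex m r i, rot_vertex m r j}"
  unfolding rot_edge_def by simp

lemma rot_vertex_inj:
  "0 \<le> x \<Longrightarrow> x < 2 * int m \<Longrightarrow> 0 \<le> y \<Longrightarrow> y < 2 * int m \<Longrightarrow>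
    rot_vertex m r x = rot_vertex m r y \<Longrightarrow> x = y"
  unfolding rot_vertex_def by (rule mod_shift_inj)

lemma rot_vertex_inv: "0 \<le> x \<Longrightarrow> x < 2 * int m \<Longrightarrow> rot_vertex m (-r) (rot_vertex m r x) = x"
  unfolding rot_vertex_def by (simp add: mod_diff_left_eq)

lemma rot_edge_ck: assumes "e \<in> ck_edges m" shows "rot_edge m r e \<in> ck_edges m"
proof -
  obtain i j where e: "e = {i,j}" "0 \<le> i" "i < 2 * int m" "0 \<le> j" "j < 2 * int m" "i \<noteq> j"
    using assms unfolding ck_edges_iff by blast
  have "rot_vertex m r i \<noteq> rot_vertex m r j" using rot_vertex_inj[of i m j r] e by auto
  moreover have "0 \<le> rot_vertex m r v \<and> rot_vertex m r v < 2 * int m" for v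
    using e unfolding rot_vertex_def by simp
  ultimately show ?thesis unfolding ck_edges_iff e rot_pair by blast
qed

lemma rot_edge_inv: assumes "e \<in> ck_edges m" shows "rot_edge m (-r) (rot_edge m r e) = e"
proof -
  have "\<forall>x\<in>e. rot_vertex m (-r) (rot_vertex m r x) = x"
  proof
    fix x assume "x \<in> e"
    hence "x \<in> {0..<2 * int m}" using ck_sub[OF assms] by blast
    thus "rot_vertex m (-r) (rot_vertex m r x) = x" using rot_vertex_inv[of x m r] by simp
  qed
  thus ?thesis unfolding rot_edge_def image_image by simp
qed

lemma rot_edge_disj:
  assumes "e \<in> ck_edges m" "f \<in> ck_edges m" "e \<inter> f = {}"
  shows "rot_edge m r e \<inter> rot_edge m r f = {}"
proof (rule ccontr)
  assume "rot_edge m r e \<inter> rot_edge m r f \<noteq> {}"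
  then obtain x1 x2 where x: "x1 \<in> e" "x2 \<in> f" "rot_vertex m r x1 = rot_vertex m r x2"
    unfolding rot_edge_def by blast
  have "x1 \<in> {0..<2 * int m}" "x2 \<in> {0..<2 * int m}" using x ck_sub[OF assms(1)] ck_sub[OF assms(2)] by blast+
  hence "x1 = x2" using rot_vertex_inj[of x1 m x2 r] x by auto
  thus False using x assms(3) by auto
qed

lemma rot_edge_cross:
  assumes "e \<in> ck_edges m" "f \<in> ck_edges m" "crosses (rot_edge m r e) (rot_edge m r f)"
  shows "crosses e f"
proof -
  obtain a b where e: "e = {a,b}" "0 \<le> a" "a < 2 * int m" "0 \<le> b" "b < 2 * int m" "a \<noteq> b"
    using assms(1) unfolding ck_edges_iff by blast
  obtain c d where f: "f = {c,d}" "0 \<le> c" "c < 2 * int m" "0 \<le> d" "d < 2 * int m" "c \<noteq> d"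
    using assms(2) unfolding ck_edges_iff by blast
  have h: "crosses {rot_vertex m r a, rot_vertex m r b} {rot_vertex m r c, rot_vertex m r d}"
    using assms(3) e f rot_pair by simp
  hence dist: "a \<noteq> c" "a \<noteq> d" "b \<noteq> c" "b \<noteq> d" unfolding crosses_iff by auto
  from h have "btw (rot_vertex m r a) (rot_vertex m r b) (rot_vertex m r c)
      \<noteq> btw (rot_vertex m r a) (rot_vertex m r b) (rot_vertex m r d)"
    unfolding crosses_iff by auto
  hence "btw a b c \<noteq> btw a b d"
    using btw_rot[of a "2 * int m" b c d r] e f dist unfolding rot_vertex_def by auto
  thus ?thesis unfolding e f crosses_iff using e f dist by auto
qed

lemma SPM_rot: assumes "is_SPM m M" shows "is_SPM m (rot_edge m r ` M)"
proof -
  have M: "M \<subseteq> ck_edges m" "finite M" "card M = m"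
    "\<And>e f. e \<in> M \<Longrightarrow> f \<in> M \<Longrightarrow> e \<noteq> f \<Longrightarrow> disjoint_edges e f"
    using assms unfolding is_SPM_def by auto
  have inj: "inj_on (rot_edge m r) M"
  proof (rule inj_onI)
    fix e f assume "e \<in> M" "f \<in> M" "rot_edge m r e = rot_edge m r f"
    thus "e = f" using rot_edge_inv[of e m r] rot_edge_inv[of f m r] M(1) by (metis subsetD)
  qed
  show ?thesis unfolding is_SPM_def
  proof (intro conjI ballI impI)
    show "rot_edge m r ` M \<subseteq> ck_edges m" using M(1) rot_edge_ck by blast
    show "finite (rot_edge m r ` M)" using M(2) by simp
    show "card (rot_edge m r ` M) = m" using card_image[OF inj] M(3) by simp
    fix e' f' assume e': "e' \<in> rot_edge m r ` M" and f': "f' \<in> rot_edge m r ` M" and ne: "e' \<noteq> f'"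
    obtain e f where ef: "e \<in> M" "f \<in> M" "e' = rot_edge m r e" "f' = rot_edge m r f" "e \<noteq> f"
      using e' f' ne by blast
    hence "disjoint_edges e f" using M(4) by blast
    thus "disjoint_edges e' f'"
      using rot_edge_disj[of e m f r] rot_edge_cross[of e m f r] ef M(1)
      unfolding disjoint_edges_def by auto
  qed
qed

section \<open>Noncrossing matchings and rainbows\<close>

definition nc_matching :: "nat \<Rightarrow> int set set \<Rightarrow> bool" where
  "nc_matching m M \<longleftrightarrow> M \<subseteq> ck_edges m \<and> finite M \<and> (\<forall>e\<in>M. \<forall>f\<in>M. e \<noteq> f \<longrightarrow> disjoint_edges e f)"

lemma SPM_iff_nc_matching: "is_SPM m M \<longleftrightarrow> nc_matching m M \<and> card M = m"
  unfolding is_SPM_def nc_matching_def by auto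

definition left_of :: "int set set \<Rightarrow> int set set \<Rightarrow> bool" where
  "left_of M M' \<longleftrightarrow> (\<forall>e\<in>M. \<forall>f\<in>M'. \<forall>x\<in>e. \<forall>y\<in>f. x < y)"

lemma nc_matching_juxtapose:
  assumes M: "nc_matching m M" and M': "nc_matching m M'" and lr: "left_of M M'"
  shows "nc_matching m (M \<union> M')" "card (M \<union> M') = card M + card M'"
proof -
  have ck: "M \<subseteq> ck_edges m" "M' \<subseteq> ck_edges m" "finite M" "finite M'"
    using M M' unfolding nc_matching_def by auto
  have "M \<inter> M' = {}"
  proof (rule ccontr)
    assume "M \<inter> M' \<noteq> {}"
    then obtain e where e: "e \<in> M" "e \<in> M'" by blast
    hence "e \<in> ck_edges m" using ck by blast
    then obtain x where "x \<in> e" unfolding ck_edges_iff by blast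
    thus False using e lr unfolding left_of_def by force
  qed
  thus "card (M \<union> M') = card M + card M'" using ck by (simp add: card_Un_disjoint)
  have sep: "disjoint_edges e f" if "e \<in> M" "f \<in> M'" for e f
    using separated_disjoint[of e m f] that ck lr unfolding left_of_def by blast
  show "nc_matching m (M \<union> M')" unfolding nc_matching_def
  proof (intro conjI ballI impI)
    show "M \<union> M' \<subseteq> ck_edges m" "finite (M \<union> M')" using ck by auto
    fix e f assume e: "e \<in> M \<union> M'" and f: "f \<in> M \<union> M'" and ne: "e \<noteq> f"
    have within: "disjoint_edges e f" if "nc_matching m N" "e \<in> N" "f \<in> N" for N
      using that ne unfolding nc_matching_def by blast
    consider "e \<in> M" "f \<in> M" | "e \<in> M'" "f \<in> M'" | "e \<in> M" "f \<in> M'" | "e \<in> M'" "f \<in> M"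
      using e f by blast
    thus "disjoint_edges e f"
      by cases (use within[OF M] within[OF M'] sep disjoint_edges_sym[OF sep] in auto)
  qed
qed

definition rainbow :: "int \<Rightarrow> int \<Rightarrow> int set set" where
  "rainbow u h = {{u + i, u + 2*h - 1 - i} | i. 0 \<le> i \<and> i < h}"

lemma rainbow_vertex: "e \<in> rainbow u h \<Longrightarrow> x \<in> e \<Longrightarrow> u \<le> x \<and> x < u + 2*h"
  unfolding rainbow_def by auto

lemma rainbow_nc_matching:
  assumes "0 \<le> u" "u + 2*h \<le> 2 * int m"
  shows "nc_matching m (rainbow u h)" "card (rainbow u h) = nat h"
proof -
  define f where "f = (\<lambda>i. {u + i, u + 2*h - 1 - i})"
  have R: "rainbow u h = f ` {0..<h}" unfolding rainbow_def f_def by auto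
  have inj: "inj_on f {0..<h}"
  proof (rule inj_onI)
    fix i j assume i: "i \<in> {0..<h}" and j: "j \<in> {0..<h}" and e: "f i = f j"
    have "u + i \<in> f j" using e unfolding f_def by auto
    thus "i = j" using i j unfolding f_def by auto
  qed
  show "card (rainbow u h) = nat h" unfolding R card_image[OF inj] by simp
  show "nc_matching m (rainbow u h)" unfolding nc_matching_def
  proof (intro conjI ballI impI)
    show "rainbow u h \<subseteq> ck_edges m"
    proof
      fix e assume "e \<in> rainbow u h"
      then obtain i where i: "i \<in> {0..<h}" "e = f i" unfolding R by auto
      show "e \<in> ck_edges m" unfolding ck_edges_iff i(2) f_def
        by (rule exI[of _ "u+i"], rule exI[of _ "u + 2*h - 1 - i"]) (use i(1) assms in auto)
    qed
    show "finite (rainbow u h)" unfolding R by simp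
    fix e g assume e: "e \<in> rainbow u h" and g: "g \<in> rainbow u h" and ne: "e \<noteq> g"
    obtain i where i: "0 \<le> i" "i < h" "e = {u + i, u + 2*h - 1 - i}" using e unfolding rainbow_def by auto
    obtain j where j: "0 \<le> j" "j < h" "g = {u + j, u + 2*h - 1 - j}" using g unfolding rainbow_def by auto
    have ij: "i \<noteq> j" using ne i j by auto
    have d: "e \<inter> g = {}" using i j ij by auto
    have "btw (u+i) (u + 2*h - 1 - i) (u + j) = btw (u+i) (u + 2*h - 1 - i) (u + 2*h - 1 - j)"
      unfolding btw_def using i j ij by auto
    hence "\<not> crosses e g" unfolding i(3) j(3) crosses_iff by auto
    thus "disjoint_edges e g" using d unfolding disjoint_edges_def by auto
  qed
qed

text \<open>The test matchings for the jump rule: a rainbow of height l, the boundary edge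
  [2l, 2l+1], and a rainbow filling the remaining vertices.\<close>
lemma two_rainbows_SPM:
  assumes "1 \<le> l" "l \<le> int m - 2"
  shows "is_SPM m (rainbow 0 l \<union> rainbow (2*l) 1 \<union> rainbow (2*l+2) (int m - 1 - l))"
proof -
  have M1: "nc_matching m (rainbow 0 l)" "card (rainbow 0 l) = nat l"
    and M2: "nc_matching m (rainbow (2*l) 1)" "card (rainbow (2*l) 1) = 1"
    and M3: "nc_matching m (rainbow (2*l+2) (int m - 1 - l))" "card (rainbow (2*l+2) (int m - 1 - l)) = nat (int m - 1 - l)"
    using rainbow_nc_matching[of _ _ m] assms by auto
  have "left_of (rainbow 0 l) (rainbow (2*l) 1)"
    unfolding left_of_def using rainbow_vertex[of _ 0 l] rainbow_vertex[of _ "2*l" 1] by fastforce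
  note M12 = nc_matching_juxtapose[OF M1(1) M2(1) this]
  have "left_of (rainbow 0 l \<union> rainbow (2*l) 1) (rainbow (2*l+2) (int m - 1 - l))"
    unfolding left_of_def
    using rainbow_vertex[of _ 0 l] rainbow_vertex[of _ "2*l" 1] rainbow_vertex[of _ "2*l+2" "int m - 1 - l"]
    by fastforce
  note M123 = nc_matching_juxtapose[OF M12(1) M3(1) this]
  show ?thesis unfolding SPM_iff_nc_matching using M123 M12(2) M1(2) M2(2) M3(2) assms by auto
qed

section \<open>Perpendicular classes\<close>

text \<open>The perpendicular class of axis position y: the m chords seg (y-d) (y+1+d),
  0 \<le> d < m, all perpendicular to the axis through y + 1/2.\<close>
definition perp_class :: "nat \<Rightarrow> int \<Rightarrow> int set set" where
  "perp_class m y = (\<lambda>d. seg m (y-d) (y+1+d)) ` {0..<int m}"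

text \<open>Each perpendicular class is a rotated rainbow, hence every blocking set meets it.\<close>
lemma blocking_meets_perp_class:
  assumes "blocking_set m B"
  shows "\<exists>d. 0 \<le> d \<and> d < int m \<and> seg m (y-d) (y+1+d) \<in> B"
proof -
  have "is_SPM m (rainbow 0 (int m))" using rainbow_nc_matching[of 0 "int m" m] SPM_iff_nc_matching by auto
  hence "is_SPM m (rot_edge m (y - int m + 1) ` rainbow 0 (int m))" by (rule SPM_rot)
  then obtain e where e: "e \<in> rot_edge m (y - int m + 1) ` rainbow 0 (int m)" "e \<in> B"
    using assms unfolding blocking_set_def by blast
  then obtain i where i: "0 \<le> i" "i < int m" "e = rot_edge m (y - int m + 1) {i, 2*int m - 1 - i}"
    unfolding rainbow_def by auto
  have "{i, 2*int m - 1 - i} = seg m i (2*int m - 1 - i)" using i by (simp add: seg_in_range)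
  hence "e = seg m (i + (y - int m + 1)) (2*int m - 1 - i + (y - int m + 1))" using i(3) seg_rot by simp
  also have "\<dots> = seg m (y - (int m - 1 - i)) (y + 1 + (int m - 1 - i))" by (simp add: algebra_simps)
  finally show ?thesis using e(2) i by (intro exI[of _ "int m - 1 - i"]) auto
qed

lemma perp_chord_inj:
  assumes "0 \<le> d" "d < int m" "0 \<le> d'" "d' < int m" "seg m (y-d) (y+1+d) = seg m (y-d') (y+1+d')"
  shows "d = d'"
proof -
  from seg_eq_cases[OF assms(5)] show ?thesis
  proof
    assume "2*int m dvd (y-d) - (y-d') \<and> 2*int m dvd (y+1+d) - (y+1+d')"
    hence "2*int m dvd d' - d" by (simp add: algebra_simps)
    thus ?thesis using dvd_small[of "2*int m" "d'-d"] assms by auto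
  next
    assume "2*int m dvd (y-d) - (y+1+d') \<and> 2*int m dvd (y+1+d) - (y-d')"
    hence "2*int m dvd d+d'+1" by (simp add: algebra_simps)
    hence "d+d'+1 = 0" using dvd_small[of "2*int m" "d+d'+1"] assms by auto
    thus ?thesis using assms by auto
  qed
qed

lemma perp_classes_disjoint:
  assumes "\<bar>y - y'\<bar> < int m" "y \<noteq> y'" "seg m (y-d) (y+1+d) = seg m (y'-d') (y'+1+d')"
  shows False
proof -
  have "2*int m dvd 2*y - 2*y'"
  proof (rule disjE[OF seg_eq_cases[OF assms(3)]])
    assume h: "2*int m dvd (y-d) - (y'-d') \<and> 2*int m dvd (y+1+d) - (y'+1+d')"
    have "2*int m dvd ((y-d) - (y'-d')) + ((y+1+d) - (y'+1+d'))" using h by (intro dvd_add) auto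
    moreover have "((y-d) - (y'-d')) + ((y+1+d) - (y'+1+d')) = 2*y - 2*y'" by simp
    ultimately show ?thesis by metis
  next
    assume h: "2*int m dvd (y-d) - (y'+1+d') \<and> 2*int m dvd (y+1+d) - (y'-d')"
    have "2*int m dvd ((y-d) - (y'+1+d')) + ((y+1+d) - (y'-d'))" using h by (intro dvd_add) auto
    moreover have "((y-d) - (y'+1+d')) + ((y+1+d) - (y'-d')) = 2*y - 2*y'" by simp
    ultimately show ?thesis by metis
  qed
  moreover have "2*y - 2*y' = 2 * (y - y')" by simp
  ultimately have "2 * int m dvd 2 * (y - y')" by metis
  hence "int m dvd y - y'" by (metis dvd_times_left_cancel_iff zero_neq_numeral)
  thus False using dvd_small[of "int m" "y - y'"] assms by auto
qed

section \<open>Caterpillars\<close>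

definition admissible :: "nat \<Rightarrow> nat \<Rightarrow> (nat \<Rightarrow> int) \<Rightarrow> bool" where
  "admissible m t \<epsilon> \<longleftrightarrow> 2 \<le> t \<and> t \<le> m \<and>
     (\<forall>k. t + 1 \<le> k \<and> k \<le> m \<longrightarrow> 1 \<le> \<epsilon> k \<and> \<epsilon> k \<le> int m - 2) \<and>
     (\<forall>k l. t + 1 \<le> k \<and> k < l \<and> l \<le> m \<longrightarrow> \<epsilon> k < \<epsilon> l)"

definition caterpillar :: "nat \<Rightarrow> int \<Rightarrow> nat \<Rightarrow> (nat \<Rightarrow> int) \<Rightarrow> int set set" where
  "caterpillar m a t \<epsilon> =
     {seg m (a + int i - 1) (a + int i) | i. 1 \<le> i \<and> i \<le> t}
     \<union> {seg m (a + int t + int j - 1 - \<epsilon> (t + j)) (a + int t + int j + \<epsilon> (t + j)) | j. 1 \<le> j \<and> j \<le> m - t}"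

text \<open>Its k-th edge lies in the perpendicular class of a + k - 1, with offset 0 on the
  spine and \<epsilon> k on the legs.\<close>
definition cat_chord :: "nat \<Rightarrow> int \<Rightarrow> nat \<Rightarrow> (nat \<Rightarrow> int) \<Rightarrow> nat \<Rightarrow> int set" where
  "cat_chord m a t \<epsilon> k =
     seg m (a + int k - 1 - (if k \<le> t then 0 else \<epsilon> k)) (a + int k + (if k \<le> t then 0 else \<epsilon> k))"

lemma caterpillar_image:
  assumes "t \<le> m"
  shows "caterpillar m a t \<epsilon> = cat_chord m a t \<epsilon> ` {1..m}"
proof
  show "caterpillar m a t \<epsilon> \<subseteq> cat_chord m a t \<epsilon> ` {1..m}"
  proof
    fix e assume "e \<in> caterpillar m a t \<epsilon>"
    then consider (spine) i where "1 \<le> i" "i \<le> t" "e = seg m (a + int i - 1) (a + int i)"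
      | (leg) j where "1 \<le> j" "j \<le> m - t"
          "e = seg m (a + int t + int j - 1 - \<epsilon> (t + j)) (a + int t + int j + \<epsilon> (t + j))"
      unfolding caterpillar_def by blast
    then show "e \<in> cat_chord m a t \<epsilon> ` {1..m}"
    proof cases
      case spine
      hence "e = cat_chord m a t \<epsilon> i" unfolding cat_chord_def by simp
      thus ?thesis using spine assms by auto
    next
      case leg
      hence "e = cat_chord m a t \<epsilon> (t + j)" unfolding cat_chord_def by (simp add: algebra_simps)
      thus ?thesis using leg assms by auto
    qed
  qed
  show "cat_chord m a t \<epsilon> ` {1..m} \<subseteq> caterpillar m a t \<epsilon>"
  proof
    fix e assume "e \<in> cat_chord m a t \<epsilon> ` {1..m}"
    then obtain k where k: "1 \<le> k" "k \<le> m" "e = cat_chord m a t \<epsilon> k" by auto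
    show "e \<in> caterpillar m a t \<epsilon>"
    proof (cases "k \<le> t")
      case True
      hence "e = seg m (a + int k - 1) (a + int k)" using k unfolding cat_chord_def by simp
      thus ?thesis using True k unfolding caterpillar_def by blast
    next
      case False
      define j where "j = k - t"
      have j: "1 \<le> j" "j \<le> m - t" "t + j = k" using False k unfolding j_def by auto
      have "e = seg m (a + int t + int j - 1 - \<epsilon> (t + j)) (a + int t + int j + \<epsilon> (t + j))"
        using k False j(3) unfolding cat_chord_def by (simp add: algebra_simps flip: j(3))
      thus ?thesis using j unfolding caterpillar_def by blast
    qed
  qed
qed

lemma perp_chords_inj: "inj_on (\<lambda>k. seg m (a + int k - 1 - \<delta> k) (a + int k + \<delta> k)) {1..m}"
proof (rule inj_onI)
  fix k k' assume k: "k \<in> {1..m}" "k' \<in> {1..m}"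
    and e: "seg m (a + int k - 1 - \<delta> k) (a + int k + \<delta> k) = seg m (a + int k' - 1 - \<delta> k') (a + int k' + \<delta> k')"
  show "k = k'"
  proof (rule ccontr)
    assume "k \<noteq> k'"
    moreover have "seg m ((a + int k - 1) - \<delta> k) ((a + int k - 1) + 1 + \<delta> k)
        = seg m ((a + int k' - 1) - \<delta> k') ((a + int k' - 1) + 1 + \<delta> k')"
      using e by (simp add: algebra_simps)
    moreover have "\<bar>(a + int k - 1) - (a + int k' - 1)\<bar> < int m" using k by auto
    ultimately show False using perp_classes_disjoint[of "a + int k - 1" "a + int k' - 1" m] by auto
  qed
qed

lemma card_caterpillar: "t \<le> m \<Longrightarrow> card (caterpillar m a t \<epsilon>) = m"
  using caterpillar_image card_image[OF perp_chords_inj] unfolding cat_chord_def by simp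

section \<open>The offset function of a blocker\<close>

lemma all_one_if_sum_le_card:
  fixes f :: "'a \<Rightarrow> nat"
  assumes "finite I" "\<And>i. i \<in> I \<Longrightarrow> 1 \<le> f i" "sum f I \<le> card I" "i \<in> I"
  shows "f i = 1"
proof (rule ccontr)
  assume "f i \<noteq> 1"
  hence "1 < f i" using assms(2)[OF assms(4)] by linarith
  hence "sum (\<lambda>_. 1) I < sum f I"
    using assms by (intro sum_strict_mono_ex1) (auto intro!: bexI[of _ i])
  thus False using assms(3) by simp
qed

locale blocker_ctx =
  fixes m :: nat and B :: "int set set"
  assumes m2: "m \<ge> 2" and bl: "blocker m B"
begin

lemma blocking: "blocking_set m B" and finite_B: "finite B" and card_B: "card B = m"
  using bl unfolding blocker_def by auto

text \<open>The classes of m consecutive axis positions are pairwise disjoint and each meets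
  B; as B has only m edges, it meets each of them exactly once and is covered by them.\<close>
lemma perp_classes_partition:
  shows "y0 \<le> y \<Longrightarrow> y < y0 + int m \<Longrightarrow> card (B \<inter> perp_class m y) = 1"
    and "B = (\<Union>y\<in>{y0..<y0 + int m}. B \<inter> perp_class m y)"
proof -
  let ?I = "{y0..<y0 + int m}" and ?F = "\<lambda>y. B \<inter> perp_class m y"
  have fin: "finite (?F y)" for y using finite_B by auto
  have pos: "1 \<le> card (?F y)" for y
    using blocking_meets_perp_class[OF blocking, of y] fin[of y]
    unfolding perp_class_def by (fastforce simp: Suc_le_eq card_gt_0_iff)
  have disj: "?F y \<inter> ?F y' = {}" if "y \<in> ?I" "y' \<in> ?I" "y \<noteq> y'" for y y'
    using perp_classes_disjoint[of y y' m] that unfolding perp_class_def by fastforce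
  have card_U: "card (\<Union>y\<in>?I. ?F y) = (\<Sum>y\<in>?I. card (?F y))"
    using disj fin by (intro card_UN_disjoint) auto
  have sub: "(\<Union>y\<in>?I. ?F y) \<subseteq> B" by auto
  have le: "(\<Sum>y\<in>?I. card (?F y)) \<le> card ?I"
    using card_mono[OF finite_B sub] card_U card_B by simp
  show one: "card (?F y) = 1" if "y0 \<le> y" "y < y0 + int m" for y
    using all_one_if_sum_le_card[of ?I "\<lambda>y. card (?F y)" y] pos le that by auto
  have "card (\<Union>y\<in>?I. ?F y) = card B" using card_U one card_B by simp
  thus "B = (\<Union>y\<in>?I. ?F y)" using card_subset_eq[OF finite_B sub] by simp
qed

definition offset :: "int \<Rightarrow> int" where
  "offset y = (THE d. 0 \<le> d \<and> d < int m \<and> seg m (y-d) (y+1+d) \<in> B)"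

lemma offset_unique:
  assumes "0 \<le> d" "d < int m" "seg m (y-d) (y+1+d) \<in> B"
    "0 \<le> d'" "d' < int m" "seg m (y-d') (y+1+d') \<in> B"
  shows "d = d'"
proof -
  have "card (B \<inter> perp_class m y) = 1" using perp_classes_partition(1)[of y y] m2 by auto
  moreover have "seg m (y-d) (y+1+d) \<in> B \<inter> perp_class m y" "seg m (y-d') (y+1+d') \<in> B \<inter> perp_class m y"
    using assms unfolding perp_class_def by auto
  ultimately have "seg m (y-d) (y+1+d) = seg m (y-d') (y+1+d')" by (metis card_1_singletonE singletonD)
  thus ?thesis using perp_chord_inj assms by blast
qed

lemma offset_spec: "0 \<le> offset y \<and> offset y < int m \<and> seg m (y - offset y) (y + 1 + offset y) \<in> B"
proof -
  obtain d where d: "0 \<le> d" "d < int m" "seg m (y-d) (y+1+d) \<in> B"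
    using blocking_meets_perp_class[OF blocking] by blast
  show ?thesis unfolding offset_def
    by (rule theI[of _ d]) (use d offset_unique in blast)+
qed

lemma offset_eq: "0 \<le> d \<Longrightarrow> d < int m \<Longrightarrow> seg m (y-d) (y+1+d) \<in> B \<Longrightarrow> offset y = d"
  using offset_spec[of y] offset_unique by blast

text \<open>The axis positions y and y + m describe the same class, with offsets d and m-1-d.\<close>
lemma offset_antiperiodic: "offset (y + int m) = int m - 1 - offset y"
proof -
  let ?r = "offset y"
  have "seg m (y + int m - (int m - 1 - ?r)) (y + int m + 1 + (int m - 1 - ?r))
      = seg m (y+1+?r) ((y - ?r) + 2*int m)"
    by (simp add: algebra_simps)
  also have "\<dots> = seg m (y - ?r) (y+1+?r)" using seg_shift seg_swap by metis
  finally show ?thesis using offset_spec[of y] by (intro offset_eq) auto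
qed

lemma B_chord:
  assumes "e \<in> B"
  shows "\<exists>y. y0 \<le> y \<and> y < y0 + int m \<and> e = seg m (y - offset y) (y + 1 + offset y)"
proof -
  obtain y where y: "y0 \<le> y" "y < y0 + int m" "e \<in> perp_class m y"
    using subsetD[OF equalityD1[OF perp_classes_partition(2)[of y0]] assms] by auto
  then obtain d where d: "0 \<le> d" "d < int m" "e = seg m (y-d) (y+1+d)" unfolding perp_class_def by auto
  hence "offset y = d" using assms offset_eq by auto
  thus ?thesis using y d by auto
qed

text \<open>Jump rule: if the offset drops from at least l to at most l between the positions
  x and x + 1, then the position x + l + 1 has offset 0.  This comes from testing B
  against a rotation of the two-rainbow matching: its rainbow chords lie in the classes
  of x and x + m + 1, so B has to contain its boundary edge.\<close>
lemma offset_jump: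
  assumes l: "1 \<le> l" "l \<le> int m - 2" and le: "offset (x+1) \<le> l" "l \<le> offset x"
  shows "offset (x + l + 1) = 0"
proof -
  let ?M = "rainbow 0 l \<union> rainbow (2*l) 1 \<union> rainbow (2*l+2) (int m - 1 - l)"
  let ?r = "x - l + 1"
  have "is_SPM m (rot_edge m ?r ` ?M)" using two_rainbows_SPM[OF l] by (rule SPM_rot)
  then obtain e0 where e0: "e0 \<in> ?M" "rot_edge m ?r e0 \<in> B"
    using blocking unfolding blocking_set_def by blast
  have rot: "rot_edge m ?r {a,b} = seg m (a + ?r) (b + ?r)"
    if "0 \<le> a" "a < 2*int m" "0 \<le> b" "b < 2*int m" for a b
    using that seg_in_range seg_rot by metis
  consider (left) "e0 \<in> rainbow 0 l" | (mid) "e0 \<in> rainbow (2*l) 1"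
    | (right) "e0 \<in> rainbow (2*l+2) (int m - 1 - l)" using e0 by blast
  then show ?thesis
  proof cases
    case left
    then obtain i where i: "0 \<le> i" "i < l" "e0 = {i, 2*l - 1 - i}" unfolding rainbow_def by auto
    have "rot_edge m ?r e0 = seg m (i + ?r) (2*l - 1 - i + ?r)" using i rot[of i "2*l-1-i"] l by auto
    also have "\<dots> = seg m (x - (l - 1 - i)) (x + 1 + (l - 1 - i))" by (simp add: algebra_simps)
    finally have "offset x = l - 1 - i" using e0(2) i l by (intro offset_eq) auto
    thus ?thesis using le i by auto
  next
    case mid
    hence "e0 = {2*l, 2*l+1}" unfolding rainbow_def by auto
    hence "rot_edge m ?r e0 = seg m (2*l + ?r) (2*l+1 + ?r)" using rot[of "2*l" "2*l+1"] l by auto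
    also have "\<dots> = seg m ((x+l+1) - 0) ((x+l+1) + 1 + 0)" by (simp add: algebra_simps)
    finally show ?thesis using e0(2) m2 by (intro offset_eq) auto
  next
    case right
    then obtain i where i: "0 \<le> i" "i < int m - 1 - l"
      "e0 = {2*l+2+i, 2*l+2 + 2*(int m - 1 - l) - 1 - i}"
      unfolding rainbow_def by auto
    have "rot_edge m ?r e0 = seg m (2*l+2+i + ?r) (2*l+2 + 2*(int m - 1 - l) - 1 - i + ?r)"
      using i rot[of "2*l+2+i" "2*l+2 + 2*(int m - 1 - l) - 1 - i"] l by auto
    also have "\<dots> = seg m ((x + int m + 1) - (int m - l - 2 - i)) ((x + int m + 1) + 1 + (int m - l - 2 - i))"
      by (simp add: algebra_simps)
    finally have "offset (x + int m + 1) = int m - l - 2 - i" using e0(2) i l by (intro offset_eq) auto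
    moreover have "offset (x + int m + 1) = int m - 1 - offset (x+1)"
      using offset_antiperiodic[of "x+1"] by (simp add: algebra_simps)
    ultimately show ?thesis using le i by auto
  qed
qed

end

section \<open>Integer functions obeying the offset rules\<close>

lemma strict_inc_growth:
  fixes f :: "int \<Rightarrow> int"
  assumes inc: "\<And>y. a \<le> y \<Longrightarrow> y < b \<Longrightarrow> f y < f (y + 1)" and "a \<le> c" "c \<le> b"
  shows "f a + (c - a) \<le> f c"
  using assms(2,3)
proof (induction c rule: int_ge_induct)
  case base
  then show ?case by simp
next
  case (step c)
  then show ?case using inc[of c] by fastforce
qed

lemma discrete_step:
  fixes a b :: int
  assumes "a < b" "P a" "\<not> P b"
  shows "\<exists>y. a \<le> y \<and> y < b \<and> P y \<and> \<not> P (y + 1)"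
proof -
  let ?S = "{y. a \<le> y \<and> y < b \<and> P y}"
  have fin: "finite ?S" by (rule finite_subset[of _ "{a..<b}"]) auto
  have y: "Max ?S \<in> ?S" using Max_in[OF fin] assms by blast
  have "\<not> P (Max ?S + 1)"
  proof
    assume "P (Max ?S + 1)"
    moreover have "Max ?S + 1 \<noteq> b" using y calculation assms(3) by auto
    ultimately have "Max ?S + 1 \<in> ?S" using y by auto
    thus False using Max_ge[OF fin] by fastforce
  qed
  thus ?thesis using y by blast
qed

locale offset_fun =
  fixes m :: nat and \<rho> :: "int \<Rightarrow> int"
  assumes m2: "m \<ge> 2"
    and bounds: "0 \<le> \<rho> y \<and> \<rho> y \<le> int m - 1"
    and antiperiodic: "\<rho> (y + int m) = int m - 1 - \<rho> y"
    and jump: "1 \<le> l \<Longrightarrow> l \<le> int m - 2 \<Longrightarrow> \<rho> (x+1) \<le> l \<Longrightarrow> l \<le> \<rho> x \<Longrightarrow> \<rho> (x + l + 1) = 0"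
begin

lemma periodic: "\<rho> (y + 2 * int m) = \<rho> y"
  using antiperiodic[of y] antiperiodic[of "y + int m"] by (simp add: algebra_simps)

lemma antiperiodic_minus: "\<rho> (y - int m) = int m - 1 - \<rho> y"
  using antiperiodic[of "y - int m"] by simp

lemma jump_up:
  assumes "1 \<le> l" "l \<le> int m - 2" "\<rho> x \<le> l" "l \<le> \<rho> (x+1)"
  shows "\<rho> (x - l) = 0"
proof -
  have "\<rho> (x + int m + (int m - 1 - l) + 1) = 0"
    using jump[of "int m - 1 - l" "x + int m"] antiperiodic[of x] antiperiodic[of "x+1"] assms
    by (simp add: algebra_simps)
  moreover have "x + int m + (int m - 1 - l) + 1 = (x - l) + 2 * int m" by simp
  ultimately show ?thesis using periodic by metis
qed

abbreviation lend :: "int \<Rightarrow> int" where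
  "lend y \<equiv> y - \<rho> y"

lemma passing_zero:
  assumes "q \<le> lend y" "lend (y + 1) \<le> q + 1" "q < y" "y \<le> q + int m - 2"
  shows "\<rho> q = 0"
  using jump_up[of "y - q" y] assms by auto

lemma zero_exists: "\<exists>z. \<rho> z = 0"
proof (rule ccontr)
  assume nz: "\<not> (\<exists>z. \<rho> z = 0)"
  have no_top: "\<rho> y \<noteq> int m - 1" for y
    using antiperiodic[of y] nz by auto
  have "\<exists>x. \<rho> (x+1) \<le> \<rho> x"
  proof (rule ccontr)
    assume "\<not> (\<exists>x. \<rho> (x+1) \<le> \<rho> x)"
    hence "\<rho> y < \<rho> (y+1)" for y by (meson not_le)
    hence "\<rho> 0 + (2 * int m - 0) \<le> \<rho> (2 * int m)"
      using strict_inc_growth[of 0 "2 * int m" \<rho> "2 * int m"] by simp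
    thus False using periodic[of 0] m2 by simp
  qed
  then obtain x where x: "\<rho> (x+1) \<le> \<rho> x" by blast
  have "\<rho> x \<noteq> 0" using nz by blast
  hence "1 \<le> \<rho> x" "\<rho> x \<le> int m - 2" using bounds[of x] no_top[of x] by linarith+
  hence "\<rho> (x + \<rho> x + 1) = 0" using jump[of "\<rho> x" x] x by auto
  thus False using nz by blast
qed

text \<open>Behind a stretch z..X of strict increase starting at a zero, every label q
  between lend X - 1 and z - 1 that is close enough to X has offset 0: the left
  endpoints must pass q somewhere in the stretch.\<close>
lemma zero_behind_increase:
  assumes "z < X" "\<rho> z = 0" "\<And>y. z \<le> y \<Longrightarrow> y < X \<Longrightarrow> \<rho> y < \<rho> (y+1)"
    "lend X - 1 \<le> q" "q \<le> z - 1" "X - int m + 1 \<le> q"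
  shows "\<rho> q = 0"
proof -
  obtain y where y: "z \<le> y" "y < X" "q \<le> lend y" "lend (y+1) \<le> q + 1"
  proof (cases "q \<le> lend X")
    case True
    have "\<rho> (X - 1) < \<rho> X" using assms(3)[of "X - 1"] assms(1) by simp
    hence "q \<le> lend (X - 1)" using True by linarith
    thus ?thesis using that[of "X - 1"] assms by auto
  next
    case False
    obtain y where "z \<le> y" "y < X" "q \<le> lend y" "\<not> q \<le> lend (y+1)"
      using discrete_step[of z X "\<lambda>y. q \<le> lend y"] False assms by auto
    thus ?thesis using that[of y] by auto
  qed
  thus ?thesis using passing_zero[of q y] assms by auto
qed

lemma extremal_pair:
  "\<exists>z T. \<rho> z = 0 \<and> \<rho> T = int m - 1 \<and> z < T \<and>
     (\<forall>y. z < y \<and> y < T \<longrightarrow> 1 \<le> \<rho> y \<and> \<rho> y \<le> int m - 2)"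
proof -
  obtain z0 where z0: "\<rho> z0 = 0" using zero_exists by blast
  have top0: "\<rho> (z0 + int m) = int m - 1" using antiperiodic[of z0] z0 by simp
  let ?S = "{y. z0 \<le> y \<and> y \<le> z0 + int m \<and> \<rho> y = 0}"
  have finS: "finite ?S" by (rule finite_subset[of _ "{z0..z0 + int m}"]) auto
  define z where "z = Max ?S"
  have zS: "z \<in> ?S" unfolding z_def by (rule Max_in[OF finS]) (use z0 in \<open>auto intro!: exI[of _ z0]\<close>)
  have zmax: "y \<in> ?S \<Longrightarrow> y \<le> z" for y unfolding z_def using Max_ge[OF finS] by blast
  have zlt: "z < z0 + int m" using zS top0 m2 by (cases "z = z0 + int m") auto
  let ?S' = "{y. z < y \<and> y \<le> z0 + int m \<and> \<rho> y = int m - 1}"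
  have finS': "finite ?S'" by (rule finite_subset[of _ "{z..z0 + int m}"]) auto
  define T where "T = Min ?S'"
  have TS: "T \<in> ?S'" unfolding T_def by (rule Min_in[OF finS']) (use zlt top0 in auto)
  have Tmin: "y \<in> ?S' \<Longrightarrow> T \<le> y" for y unfolding T_def using Min_le[OF finS'] by blast
  have "1 \<le> \<rho> y \<and> \<rho> y \<le> int m - 2" if "z < y" "y < T" for y
  proof -
    have "\<rho> y \<noteq> 0" using zmax[of y] that TS zS by force
    moreover have "\<rho> y \<noteq> int m - 1" using Tmin[of y] that TS by force
    ultimately show ?thesis using bounds[of y] by presburger
  qed
  thus ?thesis using zS TS by blast
qed

context
  fixes z T :: int
  assumes z: "\<rho> z = 0" and T: "\<rho> T = int m - 1" and zT: "z < T"
    and between: "\<And>y. z < y \<Longrightarrow> y < T \<Longrightarrow> 1 \<le> \<rho> y \<and> \<rho> y \<le> int m - 2"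
begin

text \<open>A first descent x of the offset after z is impossible: the jump rule gives a
  zero at x + \<rho> x + 1, hence a maximal offset at q = x + \<rho> x + 1 - m, and the
  left endpoints of the increasing stretches before and after x must pass q,
  producing a zero at q.\<close>
lemma no_first_descent:
  assumes x: "z \<le> x" "x < T" "\<rho> (x+1) \<le> \<rho> x"
    and incx: "\<And>y. z \<le> y \<Longrightarrow> y < x \<Longrightarrow> \<rho> y < \<rho> (y+1)"
  shows False
proof -
  have zx: "z < x"
  proof (rule ccontr)
    assume "\<not> z < x"
    hence "\<rho> (z+1) \<le> 0" using x z by auto
    thus False using between[of "z+1"] T m2 zT by (cases "z + 1 = T") auto
  qed
  define r where "r = \<rho> x"
  have r: "1 \<le> r" "r \<le> int m - 2" using between zx x unfolding r_def by auto
  have x1T: "x + 1 < T" using x r T unfolding r_def by (cases "x + 1 = T") auto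
  define q where "q = x + r + 1 - int m"
  have top_q: "\<rho> q = int m - 1"
    using jump[of r x] antiperiodic[of q] r x unfolding r_def q_def by auto
  have q_le_z: "q \<le> z"
    using between[of q] top_q r x m2 unfolding q_def by force
  have q_lt: "q < lend x - 1"
  proof (rule ccontr)
    assume "\<not> q < lend x - 1"
    moreover have "q \<noteq> z" using top_q z m2 by auto
    ultimately have "\<rho> q = 0"
      using zero_behind_increase[of z x q] zx z incx q_le_z r unfolding r_def q_def by auto
    thus False using top_q m2 by auto
  qed
  have q_ge: "T - int m + 1 \<le> q"
  proof (rule ccontr)
    assume "\<not> T - int m + 1 \<le> q"
    moreover have "\<rho> (q + int m) = 0" using jump[of r x] r x unfolding r_def q_def by auto
    moreover have "z < q + int m" using zx r unfolding q_def by auto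
    ultimately show False using between[of "q + int m"] T m2 by (cases "q + int m = T") auto
  qed
  obtain y where y: "x + 1 \<le> y" "y < T" "q < lend y" "\<not> q < lend (y+1)"
    using discrete_step[of "x+1" T "\<lambda>y. q < lend y"] x1T q_lt q_ge x T unfolding r_def by auto
  have "y \<le> q + int m - 2"
  proof (cases "y + 1 = T")
    case False
    thus ?thesis using between[of "y+1"] y zx by auto
  qed (use q_ge in auto)
  hence "\<rho> q = 0" using passing_zero[of q y] y q_le_z zx by auto
  thus False using top_q m2 by auto
qed

lemma increasing_between:
  assumes "z \<le> y" "y < T"
  shows "\<rho> y < \<rho> (y+1)"
proof (rule ccontr)
  assume desc: "\<not> ?thesis"
  let ?D = "{x. z \<le> x \<and> x < T \<and> \<rho> (x+1) \<le> \<rho> x}"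
  have fin: "finite ?D" by (rule finite_subset[of _ "{z..<T}"]) auto
  have first: "Min ?D \<in> ?D" using Min_in[OF fin] assms desc by force
  moreover have "\<rho> y' < \<rho> (y'+1)" if "z \<le> y'" "y' < Min ?D" for y'
    using Min_le[OF fin, of y'] that first by force
  ultimately show False using no_first_descent[of "Min ?D"] by auto
qed

lemma zeros_before:
  assumes "T - int m \<le> q" "q \<le> z"
  shows "\<rho> q = 0"
proof -
  consider "q = z" | "q = T - int m" | "T - int m < q" "q < z" using assms by linarith
  thus ?thesis
  proof cases
    case 2
    thus ?thesis using antiperiodic_minus[of T] T by simp
  next
    case 3
    thus ?thesis using zero_behind_increase[of z T q] zT z increasing_between T by auto
  qed (use z in simp)
qed

end

lemma offset_shape:
  "\<exists>z T. \<rho> z = 0 \<and> \<rho> T = int m - 1 \<and> z < T \<and>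
     (\<forall>y. z \<le> y \<and> y < T \<longrightarrow> \<rho> y < \<rho> (y+1)) \<and> (\<forall>q. T - int m \<le> q \<and> q \<le> z \<longrightarrow> \<rho> q = 0)"
proof -
  obtain z T where zT: "\<rho> z = 0" "\<rho> T = int m - 1" "z < T"
    and between: "\<And>y. z < y \<Longrightarrow> y < T \<Longrightarrow> 1 \<le> \<rho> y \<and> \<rho> y \<le> int m - 2"
    using extremal_pair by blast
  show ?thesis
    using zT increasing_between[OF zT between] zeros_before[OF zT between] by blast
qed

lemma increasing_offsets_admissible:
  assumes z: "\<rho> z = 0" and T: "\<rho> T = int m - 1" and zT: "z < T"
    and inc: "\<forall>y. z \<le> y \<and> y < T \<longrightarrow> \<rho> y < \<rho> (y+1)"
  shows "admissible m (nat (z - (T - int m) + 1)) (\<lambda>k. \<rho> (T - int m + int k - 1))"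
proof -
  define t where "t = nat (z - (T - int m) + 1)"
  have growth: "\<rho> y + (y' - y) \<le> \<rho> y'" if "z \<le> y" "y \<le> y'" "y' \<le> T" for y y'
    using strict_inc_growth[of y T \<rho> y'] inc that by auto
  have "T - z \<le> int m - 1" using growth[of z T] z T zT by auto
  hence t: "int t = z - (T - int m) + 1" "2 \<le> t" "t \<le> m" using zT unfolding t_def by auto
  have legs: "z + 1 \<le> T - int m + int k - 1 \<and> T - int m + int k - 1 \<le> T - 1" if "t + 1 \<le> k" "k \<le> m" for k
    using that t(1) by auto
  have "\<forall>k. t + 1 \<le> k \<and> k \<le> m \<longrightarrow> 1 \<le> \<rho> (T - int m + int k - 1) \<and> \<rho> (T - int m + int k - 1) \<le> int m - 2"
  proof (intro allI impI)
    fix k assume "t + 1 \<le> k \<and> k \<le> m"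
    thus "1 \<le> \<rho> (T - int m + int k - 1) \<and> \<rho> (T - int m + int k - 1) \<le> int m - 2"
      using legs[of k] growth[of z "T - int m + int k - 1"] growth[of "T - int m + int k - 1" T] z T by auto
  qed
  moreover have "\<forall>k l. t + 1 \<le> k \<and> k < l \<and> l \<le> m \<longrightarrow> \<rho> (T - int m + int k - 1) < \<rho> (T - int m + int l - 1)"
  proof (intro allI impI)
    fix k l assume "t + 1 \<le> k \<and> k < l \<and> l \<le> m"
    thus "\<rho> (T - int m + int k - 1) < \<rho> (T - int m + int l - 1)"
      using legs[of k] legs[of l] growth[of "T - int m + int k - 1" "T - int m + int l - 1"] by auto
  qed
  ultimately show ?thesis using t unfolding admissible_def t_def by blast
qed

end

section \<open>Necessity: every blocker is a caterpillar\<close>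

sublocale blocker_ctx \<subseteq> offset_fun m offset
  using m2 offset_spec offset_antiperiodic offset_jump by unfold_locales auto

context blocker_ctx
begin

lemma B_window:
  "B = (\<lambda>k. seg m (a + int k - 1 - offset (a + int k - 1)) (a + int k + offset (a + int k - 1))) ` {1..m}"
  (is "B = ?chord ` _")
proof
  show "B \<subseteq> ?chord ` {1..m}"
  proof
    fix e assume "e \<in> B"
    then obtain y where y: "a \<le> y" "y < a + int m" "e = seg m (y - offset y) (y + 1 + offset y)"
      using B_chord by blast
    define k where "k = nat (y - a + 1)"
    have k: "y = a + int k - 1" "k \<in> {1..m}" using y unfolding k_def by auto
    hence "e = ?chord k" using y(3) unfolding k(1) by (simp add: algebra_simps)
    thus "e \<in> ?chord ` {1..m}" using k(2) by blast
  qed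
  show "?chord ` {1..m} \<subseteq> B"
  proof
    fix e assume "e \<in> ?chord ` {1..m}"
    then obtain k where "e = ?chord k" by blast
    moreover have "seg m ((a + int k - 1) - offset (a + int k - 1)) ((a + int k - 1) + 1 + offset (a + int k - 1)) \<in> B"
      using offset_spec by blast
    ultimately show "e \<in> B" by (simp add: algebra_simps)
  qed
qed

text \<open>Reading off the structure of the offset function: the positions with offset 0
  before z form the spine, the strictly increasing offsets after z the legs.\<close>
lemma blocker_is_caterpillar: "\<exists>a t \<epsilon>. admissible m t \<epsilon> \<and> B = caterpillar m a t \<epsilon>"
proof -
  obtain z T where z: "offset z = 0" and T: "offset T = int m - 1" and zT: "z < T"
    and inc: "\<forall>y. z \<le> y \<and> y < T \<longrightarrow> offset y < offset (y+1)"
    and zeros: "\<forall>q. T - int m \<le> q \<and> q \<le> z \<longrightarrow> offset q = 0"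
    using offset_shape by blast
  define a where "a = T - int m"
  define t where "t = nat (z - a + 1)"
  define \<epsilon> where "\<epsilon> = (\<lambda>k. offset (a + int k - 1))"
  have adm: "admissible m t \<epsilon>"
    using increasing_offsets_admissible[OF z T zT inc] unfolding t_def \<epsilon>_def a_def .
  hence t: "int t = z - a + 1" "t \<le> m" unfolding admissible_def t_def by auto
  have "cat_chord m a t \<epsilon> ` {1..m}
      = (\<lambda>k. seg m (a + int k - 1 - offset (a + int k - 1)) (a + int k + offset (a + int k - 1))) ` {1..m}"
  proof (rule image_cong[OF refl])
    fix k assume k: "k \<in> {1..m}"
    show "cat_chord m a t \<epsilon> k
        = seg m (a + int k - 1 - offset (a + int k - 1)) (a + int k + offset (a + int k - 1))"
    proof (cases "k \<le> t")
      case True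
      hence "offset (a + int k - 1) = 0" using zeros k t(1) unfolding a_def by auto
      thus ?thesis using True unfolding cat_chord_def by simp
    qed (simp add: cat_chord_def \<epsilon>_def)
  qed
  hence "B = caterpillar m a t \<epsilon>" using B_window[of a] caterpillar_image[OF t(2)] by simp
  thus ?thesis using adm by blast
qed

end

section \<open>Sufficiency: caterpillars block every simple perfect matching\<close>

text \<open>A noncrossing fixed-point-free involution of the vertices 0..2m-1: the partner
  map of an SPM.  Noncrossing says: no a < c < p a < p c.\<close>
locale nc_involution =
  fixes m :: nat and p :: "int \<Rightarrow> int"
  assumes involution: "0 \<le> v \<Longrightarrow> v < 2 * int m \<Longrightarrow> 0 \<le> p v \<and> p v < 2 * int m \<and> p v \<noteq> v \<and> p (p v) = v"
    and noncrossing: "0 \<le> a \<Longrightarrow> a < 2 * int m \<Longrightarrow> 0 \<le> c \<Longrightarrow> c < 2 * int m \<Longrightarrow> \<not> (a < c \<and> c < p a \<and> p a < p c)"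
begin

lemma inside_chord:
  assumes "0 \<le> u" "u < y" "y < p u" "p u < 2 * int m"
  shows "u < p y \<and> p y < p u"
proof -
  have u: "0 \<le> p u" "p (p u) = u" using involution[of u] assms by auto
  have y: "0 \<le> p y" "p y < 2 * int m" "p (p y) = y" using involution[of y] assms by auto
  have "p y \<noteq> u" "p y \<noteq> p u" using u y assms by auto
  moreover have "\<not> p u < p y" using noncrossing[of u y] assms by auto
  moreover have "\<not> p y < u" using noncrossing[of "p y" u] assms y by auto
  ultimately show ?thesis by auto
qed

text \<open>An interval of vertices closed under p has even length: p matches its first vertex u
  with some w, and both (u, w) and (w, v] are again closed.\<close>
lemma closed_even:
  assumes "0 \<le> u" "u \<le> v + 1" "v < 2 * int m" "\<And>y. u \<le> y \<Longrightarrow> y \<le> v \<Longrightarrow> u \<le> p y \<and> p y \<le> v"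
  shows "even (v - u + 1)"
  using assms
proof (induction "nat (v - u + 1)" arbitrary: u v rule: less_induct)
  case less
  show ?case
  proof (cases "u \<le> v")
    case False
    hence "v - u + 1 = 0" using less.prems(2) by simp
    thus ?thesis by simp
  next
    case True
    define w where "w = p u"
    have pu: "0 \<le> p u" "p u < 2 * int m" "p u \<noteq> u" "p (p u) = u" using involution[of u] less.prems True by auto
    have uw: "u < w" "w \<le> v" using pu less.prems(4)[of u] True unfolding w_def by auto
    have left: "u + 1 \<le> p y \<and> p y \<le> w - 1" if "u + 1 \<le> y" "y \<le> w - 1" for y
      using inside_chord[of u y] that uw less.prems unfolding w_def by auto
    have right: "w + 1 \<le> p y \<and> p y \<le> v" if "w + 1 \<le> y" "y \<le> v" for y
    proof -
      have py: "u \<le> p y" "p y \<le> v" "p (p y) = y" using less.prems involution[of y] that uw by auto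
      have "p y \<noteq> u" "p y \<noteq> w" using py pu that uw unfolding w_def by auto
      moreover have "\<not> (u + 1 \<le> p y \<and> p y \<le> w - 1)" using left[of "p y"] py that by auto
      ultimately show ?thesis using py by auto
    qed
    have "even ((w - 1) - (u + 1) + 1)" by (rule less.hyps) (use uw less.prems left in auto)
    moreover have "even (v - (w + 1) + 1)" by (rule less.hyps) (use uw less.prems right in auto)
    moreover have "v - u + 1 = ((w - 1) - (u + 1) + 1) + (v - (w + 1) + 1) + 2" by simp
    ultimately show ?thesis by presburger
  qed
qed

lemma chord_odd:
  assumes "0 \<le> v" "v < p v" "p v < 2 * int m"
  shows "odd (p v - v)"
proof -
  have "v + 1 \<le> p y \<and> p y \<le> p v - 1" if "v + 1 \<le> y" "y \<le> p v - 1" for y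
    using inside_chord[of v y] assms that by auto
  hence "even ((p v - 1) - (v + 1) + 1)"
    by (intro closed_even) (use assms in auto)
  thus ?thesis by presburger
qed

end

text \<open>A noncrossing involution avoiding all edges of the caterpillar with spine 0..t
  and legs given by e (indexed by integers here).\<close>
locale avoiding_matching = nc_involution +
  fixes t :: int and e :: "int \<Rightarrow> int"
  assumes no_spine_edge: "1 \<le> k \<Longrightarrow> k \<le> t \<Longrightarrow> p (k - 1) \<noteq> k"
    and no_leg: "t + 1 \<le> k \<Longrightarrow> k \<le> int m \<Longrightarrow> 0 \<le> k - 1 - e k \<Longrightarrow> k + e k < 2 * int m \<Longrightarrow>
      p (k - 1 - e k) \<noteq> k + e k"
    and spine_length: "2 \<le> t" "t \<le> int m"
    and leg_bounds: "t + 1 \<le> k \<Longrightarrow> k \<le> int m \<Longrightarrow> 1 \<le> e k \<and> e k \<le> int m - 2"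
    and leg_increasing: "t + 1 \<le> k \<Longrightarrow> k < l \<Longrightarrow> l \<le> int m \<Longrightarrow> e k < e l"
begin

text \<open>No chord joins two spine vertices: the innermost such chord would be a spine edge.\<close>
lemma no_spine_chord:
  assumes "0 \<le> a" "a < b" "b \<le> t"
  shows "p a \<noteq> b"
  using assms
proof (induction "nat (b - a)" arbitrary: a b rule: less_induct)
  case less
  show ?case
  proof
    assume pab: "p a = b"
    show False
    proof (cases "b = a + 1")
      case True
      thus False using no_spine_edge[of b] less.prems pab by auto
    next
      case False
      hence "a + 1 < b" using less.prems by auto
      hence "a < p (a+1) \<and> p (a+1) < b" using inside_chord[of a "a+1"] less.prems pab spine_length by auto
      hence "a + 1 < p (a+1)" "p (a+1) < b" using involution[of "a+1"] less.prems spine_length by auto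
      thus False using less.hyps[of "p (a+1)" "a+1"] less.prems by auto
    qed
  qed
qed

lemma spine_out: assumes "0 \<le> i" "i \<le> t" shows "t < p i"
proof (rule ccontr)
  assume "\<not> t < p i"
  moreover have "0 \<le> p i" "p i \<noteq> i" "p (p i) = i" using involution[of i] assms spine_length by auto
  ultimately show False using no_spine_chord[of i "p i"] no_spine_chord[of "p i" i] assms
    by (cases "i < p i") auto
qed

lemma spine_nested: assumes "0 \<le> i" "i < t" shows "p (i+1) < p i"
proof -
  have "t < p i" "t < p (i+1)" using spine_out assms by auto
  moreover have "p (i+1) \<noteq> p i"
  proof
    assume "p (i+1) = p i"
    hence "p (p (i+1)) = p (p i)" by simp
    thus False using involution[of i] involution[of "i+1"] assms spine_length by simp
  qed
  moreover have "\<not> (p i < p (i+1))" using noncrossing[of i "i+1"] spine_out[of i] assms spine_length by auto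
  ultimately show ?thesis by auto
qed

definition mid2 :: "int \<Rightarrow> int" where "mid2 i = i + p i"

lemma mid2_antimono: assumes "0 \<le> i" "i \<le> j" "j \<le> t" shows "mid2 j \<le> mid2 i"
  using strict_inc_growth[of i t "\<lambda>i. - p i" j] spine_nested assms unfolding mid2_def by force

lemma mid2_odd: assumes "0 \<le> i" "i \<le> t" shows "odd (mid2 i)"
proof -
  have "odd (p i - i)" using chord_odd[of i] spine_out[OF assms] involution[of i] assms spine_length by auto
  thus ?thesis unfolding mid2_def by presburger
qed

lemma mid2_range: assumes "0 \<le> i" "i \<le> t" shows "2 * t + 1 \<le> mid2 i \<and> mid2 i \<le> 2 * int m - 1"
proof -
  have "mid2 t \<le> mid2 i" "mid2 i \<le> mid2 0" using mid2_antimono assms spine_length by auto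
  moreover have "t < p t" using spine_out[of t] spine_length by auto
  moreover have "p 0 < 2 * int m" using involution[of 0] spine_length by auto
  ultimately show ?thesis unfolding mid2_def by auto
qed

lemma spine_short: "t < int m"
  using mid2_range[of 0] spine_length by auto

definition leg_start :: "int \<Rightarrow> int" where "leg_start k = k - 1 - e k"

lemma leg_growth: "t + 1 \<le> k \<Longrightarrow> k \<le> k' \<Longrightarrow> k' \<le> int m \<Longrightarrow> e k + (k' - k) \<le> e k'"
  using strict_inc_growth[of k "int m" e k'] leg_increasing by auto

lemma leg_start_range: assumes "t + 1 \<le> k" "k \<le> int m" shows "1 \<le> leg_start k \<and> leg_start k \<le> t - 1"
  using leg_growth[of "t+1" k] leg_growth[of k "int m"] leg_bounds[of "t+1"] leg_bounds[of "int m"] assms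
  unfolding leg_start_def by auto

text \<open>The midpoint of the chord at the left end of the k-th leg, rounded up.\<close>
definition leg_mid :: "int \<Rightarrow> int" where "leg_mid k = (mid2 (leg_start k) + 1) div 2"

lemma leg_mid_range: "t + 1 \<le> k \<Longrightarrow> k \<le> int m \<Longrightarrow> t + 1 \<le> leg_mid k \<and> leg_mid k \<le> int m"
  using mid2_range[of "leg_start k"] leg_start_range[of k] unfolding leg_mid_def by auto

lemma leg_mid_mono: assumes "t + 1 \<le> k" "k \<le> k'" "k' \<le> int m" shows "leg_mid k \<le> leg_mid k'"
proof -
  have "leg_start k' \<le> leg_start k" using leg_growth[OF assms] unfolding leg_start_def by auto
  hence "mid2 (leg_start k) \<le> mid2 (leg_start k')"
    using mid2_antimono leg_start_range[of k'] leg_start_range[of k] assms by auto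
  thus ?thesis unfolding leg_mid_def by (simp add: zdiv_mono1)
qed

text \<open>The monotone map leg_mid sends t+1..m into itself, so it has a fixed point k0;
  then the chord at leg_start k0 has midpoint k0 - 1/2, i.e. it is the k0-th leg.\<close>
theorem avoiding_contradiction: False
proof -
  let ?S = "{k. t + 1 \<le> k \<and> k \<le> int m \<and> leg_mid k \<le> k}"
  have fin: "finite ?S" by (rule finite_subset[of _ "{t+1..int m}"]) auto
  define k0 where "k0 = Min ?S"
  have k0S: "k0 \<in> ?S" unfolding k0_def
    by (rule Min_in[OF fin]) (use leg_mid_range[of "int m"] spine_short in auto)
  have k0min: "k \<in> ?S \<Longrightarrow> k0 \<le> k" for k unfolding k0_def using Min_le[OF fin] by blast
  have fixed: "leg_mid k0 = k0"
  proof (cases "k0 = t + 1")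
    case True thus ?thesis using k0S leg_mid_range[of k0] by auto
  next
    case False
    hence "t + 1 \<le> k0 - 1" "k0 - 1 \<notin> ?S" using k0S k0min[of "k0 - 1"] by auto
    thus ?thesis using k0S leg_mid_mono[of "k0 - 1" k0] by auto
  qed
  have L: "1 \<le> leg_start k0" "leg_start k0 \<le> t - 1" using leg_start_range[of k0] k0S by auto
  have "mid2 (leg_start k0) = 2 * k0 - 1"
    using fixed mid2_odd[of "leg_start k0"] L unfolding leg_mid_def by presburger
  hence "p (k0 - 1 - e k0) = k0 + e k0" unfolding mid2_def leg_start_def by auto
  moreover have "0 \<le> k0 - 1 - e k0" using L unfolding leg_start_def by auto
  moreover have "k0 + e k0 < 2 * int m" using leg_bounds[of k0] k0S by auto
  ultimately show False using no_leg[of k0] k0S by auto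
qed

end

text \<open>An SPM covers all 2m vertices, as its m disjoint edges have two endpoints each.\<close>
lemma SPM_cover: assumes "is_SPM m M" shows "\<Union>M = {0..<2 * int m}"
proof -
  have M: "M \<subseteq> ck_edges m" "finite M" "card M = m"
    "\<And>e f. e \<in> M \<Longrightarrow> f \<in> M \<Longrightarrow> e \<noteq> f \<Longrightarrow> disjoint_edges e f"
    using assms unfolding is_SPM_def by auto
  have sub: "\<Union>M \<subseteq> {0..<2 * int m}" using M(1) ck_sub by blast
  have "pairwise disjnt M" unfolding pairwise_def disjnt_def using M(4) unfolding disjoint_edges_def by blast
  moreover have "finite e" if "e \<in> M" for e
    using that sub by (meson Sup_upper finite_atLeastLessThan_int finite_subset subset_trans)
  ultimately have "card (\<Union>M) = sum card M" by (rule card_Union_disjoint)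
  also have "\<dots> = sum (\<lambda>_. 2) M" using M(1) ck_card2 by (intro sum.cong) auto
  also have "\<dots> = card {0..<2 * int m}" using M(3) by simp
  finally show ?thesis using card_subset_eq[OF _ sub] by simp
qed

definition partner :: "int set set \<Rightarrow> int \<Rightarrow> int" where
  "partner M v = (THE w. {v,w} \<in> M)"

locale spm =
  fixes m :: nat and M :: "int set set"
  assumes spm: "is_SPM m M"
begin

lemma M_ck: "M \<subseteq> ck_edges m" and M_disjoint: "e \<in> M \<Longrightarrow> f \<in> M \<Longrightarrow> e \<noteq> f \<Longrightarrow> disjoint_edges e f"
  using spm unfolding is_SPM_def by auto

lemma pair_ne: "{v,w} \<in> M \<Longrightarrow> v \<noteq> w"
  using M_ck ck_card2[of "{v,w}" m] by (cases "v = w") auto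

lemma pair_unique: assumes "{v,w} \<in> M" "{v,w'} \<in> M" shows "w = w'"
proof (rule ccontr)
  assume "w \<noteq> w'"
  hence "{v,w} \<noteq> {v,w'}" using pair_ne[OF assms(1)] by (auto simp: doubleton_eq_iff)
  hence "{v,w} \<inter> {v,w'} = {}" using M_disjoint[OF assms] unfolding disjoint_edges_def by auto
  thus False by auto
qed

lemma partner_edge: assumes "0 \<le> v" "v < 2 * int m" shows "{v, partner M v} \<in> M"
proof -
  have "v \<in> \<Union>M" using SPM_cover[OF spm] assms by auto
  then obtain e where e: "e \<in> M" "v \<in> e" by blast
  have "e \<in> ck_edges m" using e M_ck by blast
  then obtain i j where "e = {i,j}" unfolding ck_edges_iff by blast
  hence "{v, if v = i then j else i} \<in> M" using e by (auto simp: insert_commute)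
  then obtain w where w: "{v,w} \<in> M" by blast
  show ?thesis unfolding partner_def
    by (rule theI[of _ w]) (rule w, rule pair_unique[OF _ w], assumption)
qed

lemma partner_eq: assumes "{v,w} \<in> M" shows "partner M v = w"
proof -
  have "v \<in> {0..<2 * int m}" using assms M_ck ck_sub by blast
  hence "{v, partner M v} \<in> M" using partner_edge by auto
  thus ?thesis using pair_unique assms by blast
qed


lemma partner_not:
  assumes "0 \<le> x" "x < 2 * int m" "0 \<le> y" "y < 2 * int m" "seg m x y \<notin> M"
  shows "partner M x \<noteq> y"
  using partner_edge[of x] seg_in_range[of x m y] assms by auto

end

sublocale spm \<subseteq> nc_involution m "partner M"
proof
  fix v assume v: "0 \<le> v" "v < 2 * int m"
  have e: "{v, partner M v} \<in> M" using partner_edge[OF v] .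
  hence "partner M v \<in> {0..<2 * int m}" using M_ck ck_sub by blast
  moreover have "partner M (partner M v) = v" using e by (intro partner_eq) (simp add: insert_commute)
  ultimately show "0 \<le> partner M v \<and> partner M v < 2 * int m \<and> partner M v \<noteq> v \<and> partner M (partner M v) = v"
    using pair_ne[OF e] by auto
next
  fix a c assume r: "0 \<le> a" "a < 2 * int m" "0 \<le> c" "c < 2 * int m"
  show "\<not> (a < c \<and> c < partner M a \<and> partner M a < partner M c)"
  proof
    assume h: "a < c \<and> c < partner M a \<and> partner M a < partner M c"
    have "{a, partner M a} \<in> M" "{c, partner M c} \<in> M" using partner_edge r by auto
    moreover have "{a, partner M a} \<noteq> {c, partner M c}" using h by (auto simp: doubleton_eq_iff)
    ultimately have "\<not> crosses {a, partner M a} {c, partner M c}"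
      using M_disjoint unfolding disjoint_edges_def by blast
    moreover have "btw a (partner M a) c" "\<not> btw a (partner M a) (partner M c)" using h unfolding btw_def by auto
    ultimately show False using h unfolding crosses_iff by auto
  qed
qed

lemma caterpillar_spine_edge:
  assumes "1 \<le> k" "k \<le> int t"
  shows "seg m (k - 1) k \<in> caterpillar m 0 t \<epsilon>"
proof -
  have "1 \<le> nat k" "nat k \<le> t" using assms by auto
  hence "seg m (0 + int (nat k) - 1) (0 + int (nat k)) \<in> caterpillar m 0 t \<epsilon>"
    unfolding caterpillar_def by blast
  thus ?thesis using assms by simp
qed

lemma caterpillar_leg:
  assumes "int t + 1 \<le> k" "k \<le> int m"
  shows "seg m (k - 1 - \<epsilon> (nat k)) (k + \<epsilon> (nat k)) \<in> caterpillar m 0 t \<epsilon>"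
proof -
  define j where "j = nat k - t"
  have j: "1 \<le> j" "j \<le> m - t" "t + j = nat k" "int t + int j = k" using assms unfolding j_def by auto
  hence "seg m (0 + int t + int j - 1 - \<epsilon> (t + j)) (0 + int t + int j + \<epsilon> (t + j)) \<in> caterpillar m 0 t \<epsilon>"
    unfolding caterpillar_def by blast
  thus ?thesis using j(3,4) by simp
qed

text \<open>Every SPM meets the caterpillar based at vertex 0: otherwise its partner map would
  be a noncrossing involution avoiding the caterpillar.\<close>
lemma caterpillar_meets_SPM:
  assumes adm: "admissible m t \<epsilon>" and M: "is_SPM m M"
  shows "caterpillar m 0 t \<epsilon> \<inter> M \<noteq> {}"
proof
  assume avoid: "caterpillar m 0 t \<epsilon> \<inter> M = {}"
  interpret spm m M by (rule spm.intro[OF M])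
  have t: "2 \<le> t" "t \<le> m"
    and \<epsilon>: "\<And>k. t + 1 \<le> k \<Longrightarrow> k \<le> m \<Longrightarrow> 1 \<le> \<epsilon> k \<and> \<epsilon> k \<le> int m - 2"
    and \<epsilon>_inc: "\<And>k l. t + 1 \<le> k \<Longrightarrow> k < l \<Longrightarrow> l \<le> m \<Longrightarrow> \<epsilon> k < \<epsilon> l"
    using adm unfolding admissible_def by auto
  have not_in_M: "e \<in> caterpillar m 0 t \<epsilon> \<Longrightarrow> e \<notin> M" for e
    using avoid by blast
  interpret avoiding_matching m "partner M" "int t" "\<lambda>k. \<epsilon> (nat k)"
  proof
    fix k assume "1 \<le> k" "k \<le> int t"
    thus "partner M (k - 1) \<noteq> k"
      using partner_not[of "k - 1" k] not_in_M[OF caterpillar_spine_edge] t by auto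
  next
    fix k assume k: "int t + 1 \<le> k" "k \<le> int m" "0 \<le> k - 1 - \<epsilon> (nat k)" "k + \<epsilon> (nat k) < 2 * int m"
    have "t + 1 \<le> nat k" "nat k \<le> m" using k(1,2) by auto
    hence "1 \<le> \<epsilon> (nat k)" using \<epsilon> by blast
    thus "partner M (k - 1 - \<epsilon> (nat k)) \<noteq> k + \<epsilon> (nat k)"
      using partner_not[of "k - 1 - \<epsilon> (nat k)" "k + \<epsilon> (nat k)"] not_in_M[OF caterpillar_leg[OF k(1,2)]] k
      by auto
  next
    show "2 \<le> int t" "int t \<le> int m" using t by auto
  next
    fix k assume "int t + 1 \<le> k" "k \<le> int m"
    thus "1 \<le> \<epsilon> (nat k) \<and> \<epsilon> (nat k) \<le> int m - 2" using \<epsilon>[of "nat k"] by auto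
  next
    fix k l assume "int t + 1 \<le> k" "k < l" "l \<le> int m"
    thus "\<epsilon> (nat k) < \<epsilon> (nat l)" using \<epsilon>_inc[of "nat k" "nat l"] by auto
  qed
  show False by (rule avoiding_contradiction)
qed

lemma caterpillar_rot:
  assumes "t \<le> m"
  shows "caterpillar m a t \<epsilon> = rot_edge m a ` caterpillar m 0 t \<epsilon>"
proof -
  have "cat_chord m a t \<epsilon> k = rot_edge m a (cat_chord m 0 t \<epsilon> k)" for k
    unfolding cat_chord_def seg_rot by (simp add: algebra_simps)
  thus ?thesis using caterpillar_image[OF assms] by (simp add: image_image)
qed

text \<open>Hence every caterpillar (consisting of genuine edges) is a blocker: rotate a
  given SPM so that the caterpillar is based at 0.\<close>
lemma caterpillar_blocker:
  assumes adm: "admissible m t \<epsilon>" and ck: "caterpillar m a t \<epsilon> \<subseteq> ck_edges m"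
  shows "blocker m (caterpillar m a t \<epsilon>)"
proof -
  have t: "t \<le> m" using adm unfolding admissible_def by auto
  have "caterpillar m a t \<epsilon> \<inter> M \<noteq> {}" if M: "is_SPM m M" for M
  proof -
    obtain e where e: "e \<in> M" "rot_edge m (-a) e \<in> caterpillar m 0 t \<epsilon>"
      using caterpillar_meets_SPM[OF adm SPM_rot[OF M, of "-a"]] by blast
    have "e \<in> ck_edges m" using e M unfolding is_SPM_def by auto
    hence "e = rot_edge m a (rot_edge m (-a) e)" using rot_edge_inv[of e m "-a"] by simp
    hence "e \<in> caterpillar m a t \<epsilon>" using e(2) caterpillar_rot[OF t, where a = a] by auto
    thus ?thesis using e(1) by blast
  qed
  moreover have "finite (caterpillar m a t \<epsilon>)" using caterpillar_image[OF t] by simp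
  ultimately show ?thesis using ck card_caterpillar[OF t]
    unfolding blocker_def blocking_set_def by auto
qed

section \<open>The characterisation\<close>

theorem blocker_iff_caterpillar:
  assumes "m \<ge> 2" "B \<subseteq> ck_edges m"
  shows "blocker m B \<longleftrightarrow> (\<exists>a t \<epsilon>. admissible m t \<epsilon> \<and> B = caterpillar m a t \<epsilon>)"
proof
  assume "blocker m B"
  thus "\<exists>a t \<epsilon>. admissible m t \<epsilon> \<and> B = caterpillar m a t \<epsilon>"
    using blocker_ctx.blocker_is_caterpillar blocker_ctx.intro assms(1) by blast
next
  assume "\<exists>a t \<epsilon>. admissible m t \<epsilon> \<and> B = caterpillar m a t \<epsilon>"
  then obtain a t \<epsilon> where "admissible m t \<epsilon>" "B = caterpillar m a t \<epsilon>" by blast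
  thus "blocker m B" using caterpillar_blocker assms(2) by blast
qed

theorem theorem1:
  fixes m :: nat and B :: "int set set"
  assumes "m \<ge> 2" and "B \<subseteq> ck_edges m"
  shows "blocker m B \<longleftrightarrow>
    (\<exists>(a::int) (t::nat) (\<epsilon>::nat \<Rightarrow> int).
       2 \<le> t \<and> t \<le> m \<and>
       (\<forall>k. t + 1 \<le> k \<and> k \<le> m \<longrightarrow> 1 \<le> \<epsilon> k \<and> \<epsilon> k \<le> int m - 2) \<and>
       (\<forall>k l. t + 1 \<le> k \<and> k < l \<and> l \<le> m \<longrightarrow> \<epsilon> k < \<epsilon> l) \<and>
       B = {seg m (a + int i - 1) (a + int i) | i. 1 \<le> i \<and> i \<le> t}
         \<union> {seg m (a + int t + int j - 1 - \<epsilon> (t + j)) (a + int t + int j + \<epsilon> (t + j))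
             | j. 1 \<le> j \<and> j \<le> m - t})"
  using blocker_iff_caterpillar[OF assms] unfolding admissible_def caterpillar_def by (simp only: conj_assoc)

end
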